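(* Let $\mathcal{A}$ be a unital algebra, $\tau:\mathcal{A}\to\mathbb{C}$ a unital linear functional and $\tau':\mathcal{A}\to\mathbb{C}$ a linear functional with $\tau'(1)=0$, and let $\mathcal{A}_1,\mathcal{A}_2$ be two unital subalgebras which are infinitesimally free with respect to $(\tau,\tau')$. Let $\mathcal{I}$ be an ideal of $\mathcal{A}$ with $\mathcal{I}\subset \ker(\tau)$, and set $\mathcal{I}_1=\mathcal{I}\cap \mathcal{A}_1$, $\mathcal{I}_2=\mathcal{I}\cap \mathcal{A}_2$. Then, whenever $a_n\in \mathcal{A}_{i_n},\ldots,a_1\in \mathcal{A}_{i_1}$, $v\in \mathcal{I}_h$, $b_1\in \mathcal{A}_{j_1},\ldots,b_m\in \mathcal{A}_{j_m}$ are such that any two consecutive indices in the list $i_n,\ldots,i_1,h,j_1,\ldots,j_m \in\{1,2\}$ are different and $\tau(a_n)=\cdots=\tau(a_1)=0=\tau(b_1)=\cdots=\tau(b_m)$, we have $$\tau'(a_n\cdots a_1vb_1\cdots b_m)=\tau(a_n\cdots a_1\,\tau'(v)\,b_1\cdots b_m).$$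
   Context: Infinitesimal freeness w.r.t. $(\tau,\tau')$: whenever $a_j\in\mathcal{A}_{i_j}$ ($1\le j\le n$) with consecutive indices different and $\tau(a_j)=0$ for all $j$, one has $\tau(a_1\cdots a_n)=0$ and $\tau'(a_1\cdots a_n)=\sum_{j=1}^n\tau(a_1\cdots a_{j-1}\tau'(a_j)a_{j+1}\cdots a_n)$. *)

theory Defs
  imports Complex_Main
begin

class complex_algebra_1 = ring_1 +
  fixes scaleC :: "complex \<Rightarrow> 'a \<Rightarrow> 'a" (infixr "*\<^sub>C" 75)
  assumes scaleC_add_right: "c *\<^sub>C (x + y) = c *\<^sub>C x + c *\<^sub>C y"
    and scaleC_add_left: "(c + d) *\<^sub>C x = c *\<^sub>C x + d *\<^sub>C x"
    and scaleC_scaleC: "c *\<^sub>C (d *\<^sub>C x) = (c * d) *\<^sub>C x"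
    and scaleC_one: "(1::complex) *\<^sub>C x = x"
    and mult_scaleC_left: "(c *\<^sub>C x) * y = c *\<^sub>C (x * y)"
    and mult_scaleC_right: "x * (c *\<^sub>C y) = c *\<^sub>C (x * y)"

definition clinear_functional :: "('a::complex_algebra_1 \<Rightarrow> complex) \<Rightarrow> bool" where
  "clinear_functional f \<longleftrightarrow>
     (\<forall>x y. f (x + y) = f x + f y) \<and> (\<forall>c x. f (c *\<^sub>C x) = c * f x)"

definition unital_subalgebra :: "'a::complex_algebra_1 set \<Rightarrow> bool" where
  "unital_subalgebra S \<longleftrightarrow> 1 \<in> S \<and>
     (\<forall>x\<in>S. \<forall>y\<in>S. x + y \<in> S) \<and>
     (\<forall>x\<in>S. \<forall>y\<in>S. x * y \<in> S) \<and>
     (\<forall>c. \<forall>x\<in>S. c *\<^sub>C x \<in> S)"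

definition algebra_ideal :: "'a::complex_algebra_1 set \<Rightarrow> bool" where
  "algebra_ideal I \<longleftrightarrow> 0 \<in> I \<and>
     (\<forall>x\<in>I. \<forall>y\<in>I. x + y \<in> I) \<and>
     (\<forall>c. \<forall>x\<in>I. c *\<^sub>C x \<in> I) \<and>
     (\<forall>a x. x \<in> I \<longrightarrow> a * x \<in> I \<and> x * a \<in> I)"

definition alternating :: "'i list \<Rightarrow> bool" where
  "alternating ks \<longleftrightarrow> (\<forall>k. Suc k < length ks \<longrightarrow> ks ! k \<noteq> ks ! Suc k)"

text \<open>A word a_1 ... a_n is represented as a nonempty list of pairs (index, element).
  The term tau(a_1 ... a_{j-1} tau'(a_j) a_{j+1} ... a_n) is written literally by
  replacing the j-th letter by the scalar tau'(a_j) times the unit.\<close>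
definition infinitesimally_free ::
  "('a::complex_algebra_1 \<Rightarrow> complex) \<Rightarrow> ('a \<Rightarrow> complex) \<Rightarrow> 'i set \<Rightarrow> ('i \<Rightarrow> 'a set) \<Rightarrow> bool" where
  "infinitesimally_free \<tau> \<tau>' J A \<longleftrightarrow>
     (\<forall>xs :: ('i \<times> 'a) list. xs \<noteq> [] \<longrightarrow> alternating (map fst xs) \<longrightarrow>
        (\<forall>p\<in>set xs. fst p \<in> J \<and> snd p \<in> A (fst p) \<and> \<tau> (snd p) = 0) \<longrightarrow>
        \<tau> (prod_list (map snd xs)) = 0 \<and>
        \<tau>' (prod_list (map snd xs)) =
          (\<Sum>j<length xs. \<tau> (prod_list ((map snd xs)[j := \<tau>' (snd (xs ! j)) *\<^sub>C 1]))))"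

end

theory Submission
  imports Defs
begin

text \<open>In the expansion of \<open>\<tau>'(a\<^sub>n \<cdots> a\<^sub>1 v b\<^sub>1 \<cdots> b\<^sub>m)\<close> given by infinitesimal freeness, every
  term except the one in which \<open>v\<close> itself is replaced still contains the letter \<open>v\<close>; its
  product therefore lies in the ideal \<open>\<I> \<subseteq> ker \<tau>\<close>, so the term vanishes.\<close>

lemma prod_list_in_ideal:
  fixes xs :: "'a::complex_algebra_1 list"
  assumes "algebra_ideal I" and "x \<in> set xs" and "x \<in> I"
  shows "prod_list xs \<in> I"
proof -
  obtain ys zs where "xs = ys @ x # zs"
    using assms(2) by (meson split_list)
  then have "prod_list xs = prod_list ys * x * prod_list zs"
    by (simp add: mult.assoc)
  then show ?thesis
    using assms(1,3) unfolding algebra_ideal_def by metis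
qed

lemma sum_updates_eq_update_at_ideal_letter:
  fixes \<tau> :: "'a::complex_algebra_1 \<Rightarrow> complex"
  assumes "algebra_ideal I" and "I \<subseteq> {x. \<tau> x = 0}"
    and "n < length ys" and "ys ! n \<in> I"
  shows "(\<Sum>j<length ys. \<tau> (prod_list (ys[j := c j]))) = \<tau> (prod_list (ys[n := c n]))"
proof -
  have "\<tau> (prod_list (ys[j := c j])) = 0" if "j \<noteq> n" for j
  proof -
    have "ys ! n \<in> set (ys[j := c j])"
      using that assms(3) by (metis length_list_update nth_list_update_neq nth_mem)
    then have "prod_list (ys[j := c j]) \<in> I"
      using assms(4) by (rule prod_list_in_ideal[OF assms(1)])
    then show ?thesis
      using assms(2) by auto
  qed
  then show ?thesis
    using assms(3) by (subst sum.remove[of _ n]) auto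
qed

lemma infinitesimally_free_derivative_at_ideal_letter:
  fixes \<tau> \<tau>' :: "'a::complex_algebra_1 \<Rightarrow> complex"
  assumes "infinitesimally_free \<tau> \<tau>' J A"
    and "algebra_ideal I" and "I \<subseteq> {x. \<tau> x = 0}"
    and "alternating (map fst xs)"
    and "\<forall>p\<in>set xs. fst p \<in> J \<and> snd p \<in> A (fst p) \<and> \<tau> (snd p) = 0"
    and "n < length xs" and "snd (xs ! n) \<in> I"
  shows "\<tau>' (prod_list (map snd xs)) =
         \<tau> (prod_list ((map snd xs)[n := \<tau>' (snd (xs ! n)) *\<^sub>C 1]))"
proof -
  have "xs \<noteq> []"
    using assms(6) by auto
  then have "\<tau>' (prod_list (map snd xs)) =
      (\<Sum>j<length xs. \<tau> (prod_list ((map snd xs)[j := \<tau>' (snd (xs ! j)) *\<^sub>C 1])))"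
    using assms(1,4,5) unfolding infinitesimally_free_def by blast
  also have "\<dots> = \<tau> (prod_list ((map snd xs)[n := \<tau>' (snd (xs ! n)) *\<^sub>C 1]))"
    using sum_updates_eq_update_at_ideal_letter[OF assms(2,3), of n "map snd xs"] assms(6,7)
    by simp
  finally show ?thesis .
qed

theorem lemma2p5:
  fixes \<tau> \<tau>' :: "'a::complex_algebra_1 \<Rightarrow> complex"
    and A1 A2 I :: "'a set"
    and as bs :: "(nat \<times> 'a) list" and h :: nat and v :: 'a
  assumes "clinear_functional \<tau>" and "\<tau> 1 = 1"
    and "clinear_functional \<tau>'" and "\<tau>' 1 = 0"
    and "unital_subalgebra A1" and "unital_subalgebra A2"
    and "infinitesimally_free \<tau> \<tau>' {1, 2::nat} (\<lambda>i. if i = 1 then A1 else A2)"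
    and "algebra_ideal I" and "I \<subseteq> {x. \<tau> x = 0}"
    and "\<forall>p\<in>set as. fst p \<in> {1, 2} \<and> snd p \<in> (if fst p = 1 then A1 else A2) \<and> \<tau> (snd p) = 0"
    and "\<forall>p\<in>set bs. fst p \<in> {1, 2} \<and> snd p \<in> (if fst p = 1 then A1 else A2) \<and> \<tau> (snd p) = 0"
    and "h \<in> {1, 2}" and "v \<in> I \<inter> (if h = 1 then A1 else A2)"
    and "alternating (map fst as @ [h] @ map fst bs)"
  shows "\<tau>' (prod_list (map snd as) * v * prod_list (map snd bs)) =
         \<tau> (prod_list (map snd as) * (\<tau>' v *\<^sub>C 1) * prod_list (map snd bs))"
proof -
  define xs where "xs = as @ [(h, v)] @ bs"
  have "\<tau> v = 0"
    using assms(9,13) by auto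
  then have "\<forall>p\<in>set xs. fst p \<in> {1, 2} \<and> snd p \<in> (if fst p = 1 then A1 else A2) \<and> \<tau> (snd p) = 0"
    using assms(10-13) by (auto simp: xs_def)
  moreover have "alternating (map fst xs)"
    using assms(14) by (simp add: xs_def)
  ultimately have "\<tau>' (prod_list (map snd xs)) =
      \<tau> (prod_list ((map snd xs)[length as := \<tau>' (snd (xs ! length as)) *\<^sub>C 1]))"
    using assms(13) by (intro infinitesimally_free_derivative_at_ideal_letter[OF assms(7-9)])
      (auto simp: xs_def)
  then show ?thesis
    by (simp add: xs_def list_update_append mult.assoc)
qed

end
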